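(* Let $\eta\ge 0$ and $\delta>0$ with $\delta<\sqrt{\eta^2+1/12}$. Then there exists a constant $\gamma=\gamma(\delta,\eta)<1$, depending only on $\delta$ and $\eta$, such that for every $d\in\mathbb{N}$ and every $x\in\mathbb{R}^d$ with $|x_i-1/2|=\eta$ for all $i=1,\dots,d$, \[ \lambda_d\bigl(B_\delta^d(x)\cap[0,1]^d\bigr)\le \gamma^d . \]
   Context: $B_\delta^d(x)=\{y\in\mathbb{R}^d \mid \|y-x\|_2\le \delta\sqrt{d}\}$ is the Euclidean ball of radius $\delta\sqrt d$ centered at $x$; $\lambda_d$ is $d$-dimensional Lebesgue measure. *)

theory Defs
  imports "HOL-Probability.Probability"
begin

text \<open>Vectors of R^d are represented as functions nat => real, extensional on {..<d}.
  Lebesgue measure lambda_d is the product measure of lborel over the index set {..<d}.\<close>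

definition lebesgue_d :: "nat \<Rightarrow> (nat \<Rightarrow> real) measure" where
  "lebesgue_d d = Pi\<^sub>M {..<d} (\<lambda>_. lborel)"

definition euclid_norm_d :: "nat \<Rightarrow> (nat \<Rightarrow> real) \<Rightarrow> real" where
  "euclid_norm_d d y = sqrt (\<Sum>i<d. (y i)\<^sup>2)"

definition ball_d :: "nat \<Rightarrow> real \<Rightarrow> (nat \<Rightarrow> real) \<Rightarrow> (nat \<Rightarrow> real) set" where
  "ball_d d \<delta> x = {y \<in> PiE {..<d} (\<lambda>_. UNIV).
      euclid_norm_d d (\<lambda>i. y i - x i) \<le> \<delta> * sqrt (real d)}"

definition cube_d :: "nat \<Rightarrow> (nat \<Rightarrow> real) set" where
  "cube_d d = PiE {..<d} (\<lambda>_. {0..1})"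

end

theory Submission
  imports Defs
begin

text \<open>
  A Chernoff bound. For \<open>t \<ge> 0\<close> the indicator of \<open>B\<^sub>\<delta>(x) \<inter> [0,1]\<^sup>d\<close> is dominated by
  \<open>\<Prod>\<^sub>i exp (t (\<delta>\<^sup>2 - (y\<^sub>i - x\<^sub>i)\<^sup>2)) \<one>\<^sub>[\<^sub>0\<^sub>,\<^sub>1\<^sub>](y\<^sub>i)\<close>, whose integral factorises into \<open>d\<close> copies
  of \<open>exp (t \<delta>\<^sup>2) \<integral>\<^sub>0\<^sup>1 exp (-t (z - x\<^sub>i)\<^sup>2) dz\<close>. Bounding \<open>exp (-s) \<le> 1 - s + s\<^sup>2/2\<close>, this factor is
  at most \<open>exp (t \<delta>\<^sup>2) (1 - t m + O(t\<^sup>2))\<close>, where \<open>m = \<eta>\<^sup>2 + 1/12\<close> is the mean of \<open>(z - x\<^sub>i)\<^sup>2\<close>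
  over the unit interval. Since \<open>\<delta>\<^sup>2 < m\<close>, a small \<open>t > 0\<close> makes it a constant \<open>\<gamma> < 1\<close>.
\<close>

lemma exp_minus_le_quadratic:
  fixes s :: real
  assumes "0 \<le> s"
  shows "exp (- s) \<le> 1 - s + s\<^sup>2 / 2"
proof -
  obtain u where "exp (- s) = (\<Sum>m<3. (- s) ^ m / fact m) + exp u / fact 3 * (- s) ^ 3"
    using Maclaurin_exp_le[of "- s" 3] by blast
  moreover have "(\<Sum>m<3. (- s) ^ m / fact m) = 1 - s + s\<^sup>2 / 2"
    by (simp add: numeral_3_eq_3 power2_eq_square)
  moreover have "exp u / fact 3 * (- s) ^ 3 \<le> 0"
    using assms by (simp add: mult_nonneg_nonpos)
  ultimately show ?thesis by linarith
qed

lemma nn_integral_quadratic_unit_interval: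
  fixes a c :: real
  assumes "\<And>z. z \<in> {0..1} \<Longrightarrow> 0 \<le> 1 - c * (z - a)\<^sup>2"
  shows "(\<integral>\<^sup>+ z. ennreal (1 - c * (z - a)\<^sup>2) * indicator {0..1} z \<partial>lborel)
         = ennreal (1 - c * (1/3 - a + a\<^sup>2))"
proof -
  define F where "F z = z - c * (z - a) ^ 3 / 3" for z
  have "(\<integral>\<^sup>+ z. ennreal (1 - c * (z - a)\<^sup>2) * indicator {0..1} z \<partial>lborel) = ennreal (F 1 - F 0)"
  proof (rule nn_integral_FTC_Icc)
    show "(F has_real_derivative 1 - c * (z - a)\<^sup>2) (at z)" for z
      unfolding F_def
      by (auto intro!: derivative_eq_intros simp: power2_eq_square numeral_3_eq_3 field_simps)
  qed (use assms in auto)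
  also have "F 1 - F 0 = 1 - c * (1/3 - a + a\<^sup>2)"
    unfolding F_def by (simp add: field_simps power3_eq_cube power2_eq_square)
  finally show ?thesis .
qed

lemma nn_integral_gaussian_unit_interval_le:
  fixes a t K :: real
  assumes "0 \<le> t" and "\<And>z. z \<in> {0..1} \<Longrightarrow> (z - a)\<^sup>2 \<le> K"
  shows "(\<integral>\<^sup>+ z. ennreal (exp (- t * (z - a)\<^sup>2)) * indicator {0..1} z \<partial>lborel)
         \<le> ennreal (1 - (t - t\<^sup>2 * K / 2) * (1/3 - a + a\<^sup>2))"
proof -
  define c where "c = t - t\<^sup>2 * K / 2"
  have pointwise: "exp (- t * (z - a)\<^sup>2) \<le> 1 - c * (z - a)\<^sup>2" if z: "z \<in> {0..1}" for z
  proof -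
    define w where "w = (z - a)\<^sup>2"
    have "0 \<le> w" and "w \<le> K"
      using assms(2)[OF z] unfolding w_def by simp_all
    have "exp (- t * w) \<le> 1 - t * w + t\<^sup>2 * (w * w) / 2"
      using exp_minus_le_quadratic[of "t * w"] \<open>0 \<le> t\<close> \<open>0 \<le> w\<close>
      by (simp add: power2_eq_square mult_ac)
    also have "t\<^sup>2 * (w * w) \<le> t\<^sup>2 * (K * w)"
      using \<open>0 \<le> w\<close> \<open>w \<le> K\<close> by (intro mult_left_mono mult_right_mono) auto
    finally show ?thesis unfolding w_def c_def by (simp add: algebra_simps)
  qed
  have "(\<integral>\<^sup>+ z. ennreal (exp (- t * (z - a)\<^sup>2)) * indicator {0..1} z \<partial>lborel)
      \<le> (\<integral>\<^sup>+ z. ennreal (1 - c * (z - a)\<^sup>2) * indicator {0..1} z \<partial>lborel)"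
    using pointwise by (intro nn_integral_mono) (auto split: split_indicator intro!: ennreal_leI)
  also have "\<dots> = ennreal (1 - c * (1/3 - a + a\<^sup>2))"
    using pointwise exp_gt_zero by (intro nn_integral_quadratic_unit_interval) (meson less_le_trans less_imp_le)
  finally show ?thesis unfolding c_def .
qed

lemma nn_integral_gaussian_unit_interval_le_offcentre:
  fixes a t \<eta> :: real
  assumes "0 \<le> t" and "\<bar>a - 1/2\<bar> = \<eta>"
  shows "(\<integral>\<^sup>+ z. ennreal (exp (- t * (z - a)\<^sup>2)) * indicator {0..1} z \<partial>lborel)
         \<le> ennreal (1 - (t - t\<^sup>2 * (1/2 + \<eta>)\<^sup>2 / 2) * (\<eta>\<^sup>2 + 1/12))"
proof -
  have "(a - 1/2)\<^sup>2 = \<eta>\<^sup>2" using assms(2) by (metis power2_abs)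
  then have "1/3 - a + a\<^sup>2 = \<eta>\<^sup>2 + 1/12" by (simp add: power2_eq_square algebra_simps)
  moreover have "(z - a)\<^sup>2 \<le> (1/2 + \<eta>)\<^sup>2" if "z \<in> {0..1}" for z
  proof -
    have "\<bar>z - a\<bar> \<le> 1/2 + \<eta>" using assms(2) that by (auto simp: abs_if split: if_splits)
    then show ?thesis by (metis abs_ge_zero power2_abs power_mono)
  qed
  ultimately show ?thesis
    using nn_integral_gaussian_unit_interval_le[of t a "(1/2 + \<eta>)\<^sup>2"] assms(1) by simp
qed

lemma indicator_ball_cube_le_prod_exp:
  fixes \<delta> t :: real
  assumes "0 \<le> \<delta>" and "0 \<le> t"
  shows "indicator (ball_d d \<delta> x \<inter> cube_d d) y
         \<le> (\<Prod>i<d. ennreal (exp (t * \<delta>\<^sup>2)) *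
                    (ennreal (exp (- t * (y i - x i)\<^sup>2)) * indicator {0..1} (y i)))"
proof (cases "y \<in> ball_d d \<delta> x \<inter> cube_d d")
  case True
  then have cube: "y i \<in> {0..1}" if "i < d" for i
    using that unfolding cube_d_def by (auto simp: PiE_iff)
  have "sqrt (\<Sum>i<d. (y i - x i)\<^sup>2) \<le> sqrt (\<delta>\<^sup>2 * real d)"
    using True assms(1) unfolding ball_d_def euclid_norm_d_def by (simp add: real_sqrt_mult)
  then have "0 \<le> t * (\<delta>\<^sup>2 * real d - (\<Sum>i<d. (y i - x i)\<^sup>2))"
    using assms(2) by simp
  then have "1 \<le> exp (\<Sum>i<d. t * \<delta>\<^sup>2 - t * (y i - x i)\<^sup>2)"
    by (simp add: sum_subtractf sum_distrib_left[symmetric] algebra_simps)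
  also have "\<dots> = (\<Prod>i<d. exp (t * \<delta>\<^sup>2) * exp (- t * (y i - x i)\<^sup>2))"
    by (simp add: exp_sum exp_diff exp_minus field_simps)
  finally have "ennreal 1 \<le> ennreal (\<Prod>i<d. exp (t * \<delta>\<^sup>2) * exp (- t * (y i - x i)\<^sup>2))"
    by (rule ennreal_leI)
  also have "\<dots> = (\<Prod>i<d. ennreal (exp (t * \<delta>\<^sup>2)) * ennreal (exp (- t * (y i - x i)\<^sup>2)))"
    by (simp add: prod_ennreal[symmetric] ennreal_mult)
  also have "\<dots> = (\<Prod>i<d. ennreal (exp (t * \<delta>\<^sup>2)) *
                    (ennreal (exp (- t * (y i - x i)\<^sup>2)) * indicator {0..1} (y i)))"
    using cube by (intro prod.cong) auto
  finally show ?thesis using True by simp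
qed simp

lemma emeasure_ball_cube_le_prod:
  fixes \<delta> t :: real
  assumes "0 \<le> \<delta>" and "0 \<le> t"
  shows "emeasure (lebesgue_d d) (ball_d d \<delta> x \<inter> cube_d d)
         \<le> (\<Prod>i<d. ennreal (exp (t * \<delta>\<^sup>2)) *
                    (\<integral>\<^sup>+ z. ennreal (exp (- t * (z - x i)\<^sup>2)) * indicator {0..1} z \<partial>lborel))"
proof (cases "ball_d d \<delta> x \<inter> cube_d d \<in> sets (lebesgue_d d)")
  case True
  interpret product_sigma_finite "\<lambda>_::nat. lborel"
    by (simp add: product_sigma_finite_def lborel.sigma_finite_measure_axioms)
  have "emeasure (lebesgue_d d) (ball_d d \<delta> x \<inter> cube_d d)
      = (\<integral>\<^sup>+ y. indicator (ball_d d \<delta> x \<inter> cube_d d) y \<partial>lebesgue_d d)"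
    using True by simp
  also have "\<dots> \<le> (\<integral>\<^sup>+ y. (\<Prod>i<d. ennreal (exp (t * \<delta>\<^sup>2)) *
                    (ennreal (exp (- t * (y i - x i)\<^sup>2)) * indicator {0..1} (y i))) \<partial>lebesgue_d d)"
    using assms by (intro nn_integral_mono indicator_ball_cube_le_prod_exp)
  also have "\<dots> = (\<Prod>i<d. \<integral>\<^sup>+ z. ennreal (exp (t * \<delta>\<^sup>2)) *
                    (ennreal (exp (- t * (z - x i)\<^sup>2)) * indicator {0..1} z) \<partial>lborel)"
    unfolding lebesgue_d_def by (intro product_nn_integral_prod) auto
  also have "\<dots> = (\<Prod>i<d. ennreal (exp (t * \<delta>\<^sup>2)) *
                    (\<integral>\<^sup>+ z. ennreal (exp (- t * (z - x i)\<^sup>2)) * indicator {0..1} z \<partial>lborel))"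
    by (intro prod.cong refl nn_integral_cmult) measurable
  finally show ?thesis .
qed (simp add: emeasure_notin_sets)

lemma emeasure_ball_cube_le_power:
  fixes \<eta> \<delta> t :: real
  defines "\<gamma> \<equiv> exp (t * \<delta>\<^sup>2) * (1 - (t - t\<^sup>2 * (1/2 + \<eta>)\<^sup>2 / 2) * (\<eta>\<^sup>2 + 1/12))"
  assumes "0 \<le> \<delta>" and "0 \<le> t" and "0 \<le> \<gamma>" and "\<forall>i<d. \<bar>x i - 1/2\<bar> = \<eta>"
  shows "emeasure (lebesgue_d d) (ball_d d \<delta> x \<inter> cube_d d) \<le> ennreal (\<gamma> ^ d)"
proof -
  have factor: "ennreal (exp (t * \<delta>\<^sup>2)) *
      (\<integral>\<^sup>+ z. ennreal (exp (- t * (z - x i)\<^sup>2)) * indicator {0..1} z \<partial>lborel) \<le> ennreal \<gamma>"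
    if "i < d" for i
  proof -
    have "ennreal (exp (t * \<delta>\<^sup>2)) *
        (\<integral>\<^sup>+ z. ennreal (exp (- t * (z - x i)\<^sup>2)) * indicator {0..1} z \<partial>lborel)
        \<le> ennreal (exp (t * \<delta>\<^sup>2)) * ennreal (1 - (t - t\<^sup>2 * (1/2 + \<eta>)\<^sup>2 / 2) * (\<eta>\<^sup>2 + 1/12))"
      using nn_integral_gaussian_unit_interval_le_offcentre[of t "x i" \<eta>] assms(3,5) that
      by (intro mult_left_mono) auto
    also have "\<dots> = ennreal \<gamma>"
      using \<open>0 \<le> \<gamma>\<close> unfolding \<gamma>_def by (simp add: ennreal_mult zero_le_mult_iff)
    finally show ?thesis .
  qed
  have "emeasure (lebesgue_d d) (ball_d d \<delta> x \<inter> cube_d d)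
      \<le> (\<Prod>i<d. ennreal (exp (t * \<delta>\<^sup>2)) *
            (\<integral>\<^sup>+ z. ennreal (exp (- t * (z - x i)\<^sup>2)) * indicator {0..1} z \<partial>lborel))"
    using assms(2,3) by (rule emeasure_ball_cube_le_prod)
  also have "\<dots> \<le> (\<Prod>i<d. ennreal \<gamma>)"
    using factor by (intro prod_mono_ennreal) auto
  also have "\<dots> = ennreal (\<gamma> ^ d)"
    using \<open>0 \<le> \<gamma>\<close> by (simp add: ennreal_power)
  finally show ?thesis .
qed

text \<open>
  The choice \<open>t = (m - \<delta>\<^sup>2) / (K m)\<close> gives \<open>(t - t\<^sup>2 K / 2) m = t (m + \<delta>\<^sup>2) / 2\<close>, which exceeds
  \<open>t \<delta>\<^sup>2\<close>, while \<open>K t \<le> 1\<close> keeps \<open>1 - (t - t\<^sup>2 K / 2) m\<close> nonnegative.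
\<close>

lemma exists_chernoff_exponent:
  fixes \<delta> m K :: real
  assumes "\<delta>\<^sup>2 < m" and "m \<le> K"
  shows "\<exists>t>0. 0 \<le> 1 - (t - t\<^sup>2 * K / 2) * m \<and> exp (t * \<delta>\<^sup>2) * (1 - (t - t\<^sup>2 * K / 2) * m) < 1"
proof -
  have "0 < m" using assms(1) zero_le_power2[of \<delta>] by linarith
  with assms have "0 < K" by linarith
  define t where "t = (m - \<delta>\<^sup>2) / (K * m)"
  define c where "c = t - t\<^sup>2 * K / 2"
  have "0 < t" unfolding t_def using assms(1) \<open>0 < m\<close> \<open>0 < K\<close> by simp
  have tKm: "t * K * m = m - \<delta>\<^sup>2" unfolding t_def using \<open>0 < m\<close> \<open>0 < K\<close> by simp
  have cm: "c * m = t * (m + \<delta>\<^sup>2) / 2"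
  proof -
    have "c * m = t * m - t * (t * K * m) / 2" unfolding c_def by (simp add: power2_eq_square algebra_simps)
    then show ?thesis unfolding tKm by (simp add: field_simps)
  qed
  have "K * t * m \<le> 1 * m"
    using tKm by (simp add: mult.commute mult.left_commute)
  then have "K * t \<le> 1" using \<open>0 < m\<close> by simp
  have "2 * K * c = 1 - (1 - K * t)\<^sup>2"
    unfolding c_def by (simp add: power2_eq_square algebra_simps)
  then have "2 * K * c \<le> 1" by simp
  have "c * m \<le> 1"
  proof -
    have "2 * K * (c * m) \<le> 1 * m"
      using \<open>2 * K * c \<le> 1\<close> \<open>0 < m\<close> by (simp add: mult.assoc[symmetric] mult_right_mono)
    also have "\<dots> \<le> 2 * K * 1" using \<open>m \<le> K\<close> \<open>0 < K\<close> by simp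
    finally show ?thesis using \<open>0 < K\<close> by simp
  qed
  have "t * \<delta>\<^sup>2 < t * m" using \<open>0 < t\<close> assms(1) by simp
  then have "1 - c * m < 1 - t * \<delta>\<^sup>2" using cm by (simp add: field_simps)
  also have "\<dots> \<le> exp (- (t * \<delta>\<^sup>2))" using exp_ge_add_one_self[of "- (t * \<delta>\<^sup>2)"] by simp
  finally have "exp (t * \<delta>\<^sup>2) * (1 - c * m) < 1"
    by (simp add: exp_minus field_simps)
  then show ?thesis using \<open>0 < t\<close> \<open>c * m \<le> 1\<close> unfolding c_def by auto
qed

theorem lemma2p2:
  fixes \<eta> \<delta> :: real
  assumes "\<eta> \<ge> 0" and "\<delta> > 0" and "\<delta> < sqrt (\<eta>\<^sup>2 + 1/12)"
  shows "\<exists>\<gamma>::real. \<gamma> < 1 \<and>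
    (\<forall>d::nat. \<forall>x::nat \<Rightarrow> real.
       (\<forall>i<d. \<bar>x i - 1/2\<bar> = \<eta>) \<longrightarrow>
       emeasure (lebesgue_d d) (ball_d d \<delta> x \<inter> cube_d d) \<le> ennreal (\<gamma> ^ d))"
proof -
  define m where "m = \<eta>\<^sup>2 + 1/12"
  define K where "K = (1/2 + \<eta>)\<^sup>2"
  have "sqrt (\<delta>\<^sup>2) < sqrt m" using assms(2,3) unfolding m_def by simp
  then have "\<delta>\<^sup>2 < m" by (simp only: real_sqrt_less_iff)
  moreover have "m \<le> K" unfolding m_def K_def using assms(1) by (simp add: power2_eq_square algebra_simps)
  ultimately obtain t where "0 < t" and nonneg: "0 \<le> 1 - (t - t\<^sup>2 * K / 2) * m"
      and lt1: "exp (t * \<delta>\<^sup>2) * (1 - (t - t\<^sup>2 * K / 2) * m) < 1"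
    using exists_chernoff_exponent by blast
  show ?thesis
  proof (intro exI[of _ "exp (t * \<delta>\<^sup>2) * (1 - (t - t\<^sup>2 * K / 2) * m)"] conjI allI impI)
    fix d :: nat and x :: "nat \<Rightarrow> real"
    assume "\<forall>i<d. \<bar>x i - 1/2\<bar> = \<eta>"
    then show "emeasure (lebesgue_d d) (ball_d d \<delta> x \<inter> cube_d d)
        \<le> ennreal ((exp (t * \<delta>\<^sup>2) * (1 - (t - t\<^sup>2 * K / 2) * m)) ^ d)"
      using emeasure_ball_cube_le_power[of \<delta> t \<eta>] assms(2) \<open>0 < t\<close> nonneg
      unfolding m_def K_def by simp
  qed (rule lt1)
qed

end
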